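(* Consider DODA in the setting of the context. Assume the maximum delay is bounded by $\tau$, that the feedback associated with time step $t$ is the whole vector field $V_t=\nabla f_t$ (which can be evaluated at any point immediately, without delay), and that each $V_t$ is $L$-Lipschitz continuous. Take guesses $\tilde g_{t+1/2}=\tilde V_t(x_t)$, where $\tilde V_t=V_s$ for some $s\in\mathcal S_t$, and learning rates satisfying $\eta_{t+1}\le\eta_t$, $(2\tau+1)\eta_t\le\gamma_t$ and $2\gamma_t^2L^2\le1$ for all $t$. Then for every $p\in\mathcal V$ the regret evaluated at $x_{3/2},\dots,x_{T+1/2}$ satisfies \[R_T(p)\le\frac{\|p-x_1\|^2}{2\eta_T}+\sum_{t=1}^T\gamma_t\|V_t(x_t)-\tilde V_t(x_t)\|^2.\]
   Context: Unconstrained Euclidean setting: $\mathcal V$ finite-dimensional Euclidean space; losses $f_t:\mathcal V\to\mathbb R$ convex and differentiable. At each round $t=1,\dots,T$ one agent is active. $\mathcal S_t\subset\{1,\dots,t-1\}$ is the set of timestamps $s$ whose feedback is available to the active agent at time $t$ (nondecreasing in time for each agent). DODA: given $x_1\in\mathcal V$, $x_t=x_1-\eta_t\sum_{s\in\mathcal S_t}g_{s+1/2}$ and $x_{t+1/2}=x_t-\gamma_t\tilde g_{t+1/2}$; the agent plays $x_{t+1/2}$ and $g_{t+1/2}=V_t(x_{t+1/2})$. Regret: $R_T(p)=\sum_{t=1}^Tf_t(x_{t+1/2})-\sum_{t=1}^Tf_t(p)$. Maximum delay bounded by $\tau$: $\{1,\dots,t-\tau-1\}\subset\mathcal S_t$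 for all $t$. *)

theory Defs
  imports "HOL-Analysis.Analysis"
begin

end

theory Submission
  imports Defs
begin

(* With g_t = V_t(x_{t+1/2}), convexity bounds the regret by sum_t <g_t, x_{t+1/2} - p>.
   Compare x_{t+1/2} with the undelayed dual-averaging iterate w_t = x_1 - eta_t sum_{s<t} g_s,
   for which sum_t <g_t, w_t - p> <= |p - x_1|^2 / (2 eta_T) + sum_t eta_t |g_t|^2 / 2.
   The difference x_{t+1/2} - w_t consists of the gradients not yet received at time t and of
   the optimistic step -gamma_t g~_t. Each gradient is missing in at most tau rounds, so the
   former costs at most tau sum_t eta_t |g_t|^2. As (2 tau + 1) eta_t <= gamma_t, each round
   leaves at most gamma_t |g_t|^2 / 2 - gamma_t <g_t, g~_t>, and the extra-gradient estimate
   (Lipschitz continuity of V_t and 2 gamma_t^2 L^2 <= 1) bounds this by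
   gamma_t |V_t(x_t) - g~_t|^2. *)

lemma convex_on_has_derivative_above_tangent:
  fixes f :: "'a::real_normed_vector \<Rightarrow> real"
  assumes convex: "convex_on UNIV f" and deriv: "(f has_derivative f') (at y)"
  shows "f y + f' (z - y) \<le> f z"
proof -
  define \<phi> where "\<phi> s = f (y + s *\<^sub>R (z - y))" for s :: real
  have "convex_on UNIV \<phi>"
  proof (rule convex_onI)
    fix t a b :: real assume "0 < t" "t < 1"
    have "y + ((1 - t) *\<^sub>R a + t *\<^sub>R b) *\<^sub>R (z - y)
        = (1 - t) *\<^sub>R (y + a *\<^sub>R (z - y)) + t *\<^sub>R (y + b *\<^sub>R (z - y))"
      by (simp add: algebra_simps)
    then show "\<phi> ((1 - t) *\<^sub>R a + t *\<^sub>R b) \<le> (1 - t) * \<phi> a + t * \<phi> b"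
      unfolding \<phi>_def using convex_onD[OF convex, of t] \<open>0 < t\<close> \<open>t < 1\<close> by simp
  qed simp
  moreover have "(\<phi> has_field_derivative f' (z - y)) (at 0)"
  proof -
    have "((\<lambda>s. y + s *\<^sub>R (z - y)) has_derivative (\<lambda>s. s *\<^sub>R (z - y))) (at 0)"
      by (auto intro!: derivative_eq_intros)
    moreover have "(f has_derivative f') (at (y + 0 *\<^sub>R (z - y)))"
      using deriv by simp
    ultimately have "(\<phi> has_derivative (\<lambda>s. f' (s *\<^sub>R (z - y)))) (at 0)"
      unfolding \<phi>_def by (rule diff_chain_at[unfolded comp_def])
    then show ?thesis
      by (simp add: has_field_derivative_def linear_cmul[OF has_derivative_linear[OF deriv]]
          mult_commute_abs)
  qed
  ultimately have "f' (z - y) * (1 - 0) \<le> \<phi> 1 - \<phi> 0"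
    by (intro convex_on_imp_above_tangent) auto
  then show ?thesis
    by (simp add: \<phi>_def)
qed

lemma Youngs_inequality_inner:
  fixes a b :: "'a::real_inner"
  assumes "0 < e"
  shows "a \<bullet> b \<le> e / 2 * (norm a)\<^sup>2 + (norm b)\<^sup>2 / (2 * e)"
proof -
  have "0 \<le> (norm (e *\<^sub>R a - b))\<^sup>2"
    by simp
  also have "\<dots> = e\<^sup>2 * (norm a)\<^sup>2 - 2 * e * (a \<bullet> b) + (norm b)\<^sup>2"
    unfolding power2_norm_eq_inner
    by (simp add: inner_diff_left inner_diff_right inner_commute power2_eq_square algebra_simps)
  finally have "2 * e * (a \<bullet> b) \<le> e\<^sup>2 * (norm a)\<^sup>2 + (norm b)\<^sup>2"
    by simp
  then show ?thesis
    using assms by (simp add: field_simps power2_eq_square)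
qed

lemma norm_add_sq_le:
  fixes a b :: "'a::real_inner"
  shows "(norm (a + b))\<^sup>2 \<le> 2 * (norm a)\<^sup>2 + 2 * (norm b)\<^sup>2"
  using Youngs_inequality_inner[of 1 a b]
  by (simp add: power2_norm_eq_inner inner_add_left inner_add_right inner_commute)

lemma dual_averaging_potential:
  fixes g :: "nat \<Rightarrow> 'a::real_inner"
  assumes antimono: "\<And>t. 1 \<le> t \<Longrightarrow> \<eta> (t + 1) \<le> \<eta> t"
  shows "(\<Sum>t=1..n. g t \<bullet> (x\<^sub>1 - \<eta> t *\<^sub>R (\<Sum>s=1..<t. g s)) - \<eta> t / 2 * (norm (g t))\<^sup>2)
         \<le> (\<Sum>s=1..n. g s) \<bullet> x\<^sub>1 - \<eta> n / 2 * (norm (\<Sum>s=1..n. g s))\<^sup>2"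
proof (induction n)
  case 0
  then show ?case by simp
next
  case (Suc n)
  define A where "A = (\<Sum>s=1..n. g s)"
  define c where "c = g (Suc n)"
  have sum_next: "(\<Sum>s=1..Suc n. g s) = A + c" and sum_prev: "(\<Sum>s=1..<Suc n. g s) = A"
    by (simp_all add: A_def c_def atLeastLessThanSuc_atLeastAtMost)
  have "\<eta> (Suc n) * (norm A)\<^sup>2 \<le> \<eta> n * (norm A)\<^sup>2"
    using antimono[of n] by (cases "n = 0") (auto simp: A_def intro: mult_right_mono)
  then have "A \<bullet> x\<^sub>1 - \<eta> n / 2 * (norm A)\<^sup>2 + (c \<bullet> (x\<^sub>1 - \<eta> (Suc n) *\<^sub>R A) - \<eta> (Suc n) / 2 * (norm c)\<^sup>2)
      \<le> (A + c) \<bullet> x\<^sub>1 - \<eta> (Suc n) / 2 * (norm (A + c))\<^sup>2"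
    unfolding power2_norm_eq_inner
    by (simp add: inner_add_left inner_add_right inner_diff_right inner_commute algebra_simps)
  moreover have "(\<Sum>t=1..Suc n. g t \<bullet> (x\<^sub>1 - \<eta> t *\<^sub>R (\<Sum>s=1..<t. g s)) - \<eta> t / 2 * (norm (g t))\<^sup>2)
      = c \<bullet> (x\<^sub>1 - \<eta> (Suc n) *\<^sub>R A) - \<eta> (Suc n) / 2 * (norm c)\<^sup>2
        + (\<Sum>t=1..n. g t \<bullet> (x\<^sub>1 - \<eta> t *\<^sub>R (\<Sum>s=1..<t. g s)) - \<eta> t / 2 * (norm (g t))\<^sup>2)"
    by (subst sum.nat_ivl_Suc') (simp, simp only: sum_prev c_def)
  ultimately show ?case
    using Suc.IH unfolding sum_next A_def[symmetric] by linarith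
qed

lemma dual_averaging_regret:
  fixes g :: "nat \<Rightarrow> 'a::real_inner"
  assumes antimono: "\<And>t. 1 \<le> t \<Longrightarrow> \<eta> (t + 1) \<le> \<eta> t" and pos: "0 < \<eta> T"
  shows "(\<Sum>t=1..T. g t \<bullet> (x\<^sub>1 - \<eta> t *\<^sub>R (\<Sum>s=1..<t. g s) - p))
         \<le> (norm (p - x\<^sub>1))\<^sup>2 / (2 * \<eta> T) + (\<Sum>t=1..T. \<eta> t / 2 * (norm (g t))\<^sup>2)"
proof -
  have "(\<Sum>s=1..T. g s) \<bullet> (x\<^sub>1 - p)
        \<le> \<eta> T / 2 * (norm (\<Sum>s=1..T. g s))\<^sup>2 + (norm (x\<^sub>1 - p))\<^sup>2 / (2 * \<eta> T)"
    by (rule Youngs_inequality_inner[OF pos])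
  with dual_averaging_potential[of \<eta> g x\<^sub>1 T, OF antimono] show ?thesis
    by (simp add: inner_diff_right inner_sum_left sum_subtractf norm_minus_commute)
qed

lemma double_sum_delayed_le:
  fixes b :: "nat \<Rightarrow> real" and \<tau> :: nat
  assumes nonneg: "\<And>s. s \<in> {1..T} \<Longrightarrow> 0 \<le> b s"
    and delayed: "\<And>t s. t \<in> {1..T} \<Longrightarrow> s \<in> M t \<Longrightarrow> 1 \<le> s \<and> s < t \<and> t \<le> s + \<tau>"
  shows "(\<Sum>t=1..T. \<Sum>s\<in>M t. b s) \<le> real \<tau> * (\<Sum>s=1..T. b s)"
proof -
  have "(\<Sum>t=1..T. \<Sum>s\<in>M t. b s) = (\<Sum>t=1..T. \<Sum>s\<in>{s. s \<in> {1..T} \<and> s \<in> M t}. b s)"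
    using delayed by (intro sum.cong refl arg_cong[where f = "sum b"]) force
  also have "\<dots> = (\<Sum>s=1..T. \<Sum>t\<in>{t. t \<in> {1..T} \<and> s \<in> M t}. b s)"
    by (rule sum.swap_restrict) auto
  also have "\<dots> = (\<Sum>s=1..T. card {t. t \<in> {1..T} \<and> s \<in> M t} * b s)"
    by simp
  also have "\<dots> \<le> (\<Sum>s=1..T. \<tau> * b s)"
  proof (intro sum_mono mult_right_mono nonneg)
    fix s
    have "{t. t \<in> {1..T} \<and> s \<in> M t} \<subseteq> {s<..s + \<tau>}"
      using delayed by auto
    then show "real (card {t. t \<in> {1..T} \<and> s \<in> M t}) \<le> \<tau>"
      by (metis card_greaterThanAtMost card_mono finite_greaterThanAtMost add_diff_cancel_left'
          of_nat_mono)
  qed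
  finally show ?thesis
    by (simp add: sum_distrib_left)
qed

lemma stale_gradients_le:
  fixes g :: "nat \<Rightarrow> 'a::real_inner" and \<eta> :: "nat \<Rightarrow> real" and \<tau> :: nat
  assumes nonneg: "\<And>t. 1 \<le> t \<Longrightarrow> 0 \<le> \<eta> t"
    and antimono: "\<And>t. 1 \<le> t \<Longrightarrow> \<eta> (t + 1) \<le> \<eta> t"
    and delayed: "\<And>t s. t \<in> {1..T} \<Longrightarrow> s \<in> M t \<Longrightarrow> 1 \<le> s \<and> s < t \<and> t \<le> s + \<tau>"
  shows "(\<Sum>t=1..T. \<eta> t * (g t \<bullet> (\<Sum>s\<in>M t. g s))) \<le> real \<tau> * (\<Sum>t=1..T. \<eta> t * (norm (g t))\<^sup>2)"
proof -
  define b where "b s = \<eta> s / 2 * (norm (g s))\<^sup>2" for s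
  have round: "\<eta> t * (g t \<bullet> (\<Sum>s\<in>M t. g s)) \<le> real \<tau> * b t + (\<Sum>s\<in>M t. b s)"
    if t: "t \<in> {1..T}" for t
  proof -
    have pair: "\<eta> t * (g t \<bullet> g s) \<le> b t + b s" if "s \<in> M t" for s
    proof -
      have "\<eta> t \<le> \<eta> s"
      proof (rule lift_Suc_antimono_le_ivl[of "{1..}"])
        show "\<eta> (Suc n) \<le> \<eta> n" if "n \<in> {1..}" for n
          using antimono[of n] that by simp
      qed (use delayed[OF t that] in auto)
      then have "\<eta> t * (norm (g s))\<^sup>2 \<le> \<eta> s * (norm (g s))\<^sup>2"
        by (rule mult_right_mono) simp
      moreover have "\<eta> t * (g t \<bullet> g s) \<le> \<eta> t * ((norm (g t))\<^sup>2 / 2 + (norm (g s))\<^sup>2 / 2)"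
        using Youngs_inequality_inner[of 1 "g t" "g s"] nonneg[of t] t by (intro mult_left_mono) auto
      ultimately show ?thesis
        unfolding b_def by (simp add: algebra_simps)
    qed
    have "card (M t) \<le> \<tau>"
      using card_mono[of "{t - \<tau>..<t}" "M t"] delayed[OF t] by force
    then have "card (M t) * b t \<le> real \<tau> * b t"
      using nonneg[of t] t by (intro mult_right_mono) (auto simp: b_def)
    moreover have "\<eta> t * (g t \<bullet> (\<Sum>s\<in>M t. g s)) \<le> (\<Sum>s\<in>M t. b t + b s)"
      unfolding inner_sum_right sum_distrib_left by (rule sum_mono) (rule pair)
    ultimately show ?thesis
      by (simp add: sum.distrib)
  qed
  have "(\<Sum>t=1..T. \<eta> t * (g t \<bullet> (\<Sum>s\<in>M t. g s)))
        \<le> (\<Sum>t=1..T. real \<tau> * b t + (\<Sum>s\<in>M t. b s))"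
    by (rule sum_mono) (rule round)
  also have "\<dots> = real \<tau> * (\<Sum>t=1..T. b t) + (\<Sum>t=1..T. \<Sum>s\<in>M t. b s)"
    by (simp add: sum.distrib sum_distrib_left)
  also have "(\<Sum>t=1..T. \<Sum>s\<in>M t. b s) \<le> real \<tau> * (\<Sum>t=1..T. b t)"
    using nonneg delayed by (intro double_sum_delayed_le) (auto simp: b_def)
  finally show ?thesis
    by (simp add: b_def sum_distrib_left sum_divide_distrib[symmetric])
qed

lemma delayed_dual_averaging_linearized_regret:
  fixes g q xh :: "nat \<Rightarrow> 'a::real_inner" and \<eta> \<gamma> :: "nat \<Rightarrow> real" and \<tau> :: nat
  assumes S_sub: "\<And>t. S t \<subseteq> {1..<t}"
    and delay: "\<And>t. 1 \<le> t \<Longrightarrow> {1..<t - \<tau>} \<subseteq> S t"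
    and xh: "\<And>t. 1 \<le> t \<Longrightarrow> xh t = x\<^sub>1 - \<eta> t *\<^sub>R (\<Sum>s\<in>S t. g s) - \<gamma> t *\<^sub>R q t"
    and pos: "\<And>t. 1 \<le> t \<Longrightarrow> 0 < \<eta> t"
    and antimono: "\<And>t. 1 \<le> t \<Longrightarrow> \<eta> (t + 1) \<le> \<eta> t"
    and "1 \<le> T"
  shows "(\<Sum>t=1..T. g t \<bullet> (xh t - p))
         \<le> (norm (p - x\<^sub>1))\<^sup>2 / (2 * \<eta> T)
            + (\<Sum>t=1..T. (2 * real \<tau> + 1) * \<eta> t / 2 * (norm (g t))\<^sup>2 - \<gamma> t * (g t \<bullet> q t))"
proof -
  define M where "M t = {1..<t} - S t" for t
  have "xh t - p = (x\<^sub>1 - \<eta> t *\<^sub>R (\<Sum>s=1..<t. g s) - p) + \<eta> t *\<^sub>R (\<Sum>s\<in>M t. g s)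
                   - \<gamma> t *\<^sub>R q t" if "1 \<le> t" for t
  proof -
    have "(\<Sum>s=1..<t. g s) = (\<Sum>s\<in>M t. g s) + (\<Sum>s\<in>S t. g s)"
      unfolding M_def using S_sub by (intro sum.subset_diff) auto
    then show ?thesis
      using xh[OF that] by (simp add: scaleR_add_right algebra_simps)
  qed
  then have "(\<Sum>t=1..T. g t \<bullet> (xh t - p))
      = (\<Sum>t=1..T. g t \<bullet> (x\<^sub>1 - \<eta> t *\<^sub>R (\<Sum>s=1..<t. g s) - p))
        + (\<Sum>t=1..T. \<eta> t * (g t \<bullet> (\<Sum>s\<in>M t. g s))) - (\<Sum>t=1..T. \<gamma> t * (g t \<bullet> q t))"
    by (simp add: inner_add_right inner_diff_right sum.distrib sum_subtractf)
  also have "\<dots> \<le> ((norm (p - x\<^sub>1))\<^sup>2 / (2 * \<eta> T) + (\<Sum>t=1..T. \<eta> t / 2 * (norm (g t))\<^sup>2))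
        + real \<tau> * (\<Sum>t=1..T. \<eta> t * (norm (g t))\<^sup>2) - (\<Sum>t=1..T. \<gamma> t * (g t \<bullet> q t))"
  proof (intro diff_right_mono add_mono dual_averaging_regret stale_gradients_le)
    show "t \<in> {1..T} \<Longrightarrow> s \<in> M t \<Longrightarrow> 1 \<le> s \<and> s < t \<and> t \<le> s + \<tau>" for t s
      using delay[of t] unfolding M_def by (auto simp: subset_iff)
  qed (use antimono pos \<open>1 \<le> T\<close> less_imp_le in auto)
  also have "\<dots> = (norm (p - x\<^sub>1))\<^sup>2 / (2 * \<eta> T)
            + (\<Sum>t=1..T. (2 * real \<tau> + 1) * \<eta> t / 2 * (norm (g t))\<^sup>2 - \<gamma> t * (g t \<bullet> q t))"
  proof -
    have split: "(2 * real \<tau> + 1) * \<eta> t / 2 * (norm (g t))\<^sup>2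
          = \<eta> t / 2 * (norm (g t))\<^sup>2 + real \<tau> * (\<eta> t * (norm (g t))\<^sup>2)" for t
      by (simp add: algebra_simps)
    show ?thesis
      unfolding split sum_subtractf sum.distrib sum_distrib_left by linarith
  qed
  finally show ?thesis .
qed

lemma extra_gradient_step_le:
  fixes V :: "'a::real_inner \<Rightarrow> 'a"
  assumes lipschitz: "\<And>y z. norm (V y - V z) \<le> L * norm (y - z)"
    and "0 \<le> \<gamma>" and step_size: "2 * \<gamma>\<^sup>2 * L\<^sup>2 \<le> 1"
  shows "\<gamma> / 2 * (norm (V (x - \<gamma> *\<^sub>R q)))\<^sup>2 - \<gamma> * (V (x - \<gamma> *\<^sub>R q) \<bullet> q)
         \<le> \<gamma> * (norm (V x - q))\<^sup>2"
proof -
  define g where "g = V (x - \<gamma> *\<^sub>R q)"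
  have "norm (g - V x) \<le> L * (\<gamma> * norm q)"
    using lipschitz[of "x - \<gamma> *\<^sub>R q" x] \<open>0 \<le> \<gamma>\<close> by (simp add: g_def)
  then have "(norm (g - V x))\<^sup>2 \<le> L\<^sup>2 * \<gamma>\<^sup>2 * (norm q)\<^sup>2"
    by (metis norm_ge_zero power_mono power_mult_distrib mult.assoc)
  then have "(norm (g - q))\<^sup>2 \<le> 2 * (L\<^sup>2 * \<gamma>\<^sup>2 * (norm q)\<^sup>2) + 2 * (norm (V x - q))\<^sup>2"
    using norm_add_sq_le[of "g - V x" "V x - q"] by simp
  then have "\<gamma> / 2 * (norm (g - q))\<^sup>2
             \<le> \<gamma> / 2 * (2 * (L\<^sup>2 * \<gamma>\<^sup>2 * (norm q)\<^sup>2) + 2 * (norm (V x - q))\<^sup>2)"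
    using \<open>0 \<le> \<gamma>\<close> by (intro mult_left_mono) auto
  also have "\<dots> = (2 * \<gamma>\<^sup>2 * L\<^sup>2) * (\<gamma> / 2 * (norm q)\<^sup>2) + \<gamma> * (norm (V x - q))\<^sup>2"
    by (simp add: algebra_simps)
  also have "\<dots> \<le> \<gamma> / 2 * (norm q)\<^sup>2 + \<gamma> * (norm (V x - q))\<^sup>2"
    using mult_left_le_one_le[of "\<gamma> / 2 * (norm q)\<^sup>2" "2 * \<gamma>\<^sup>2 * L\<^sup>2"] step_size \<open>0 \<le> \<gamma>\<close>
    by simp
  finally have "\<gamma> / 2 * (norm (g - q))\<^sup>2 - \<gamma> / 2 * (norm q)\<^sup>2 \<le> \<gamma> * (norm (V x - q))\<^sup>2"
    by simp
  moreover have "\<gamma> / 2 * (norm (g - q))\<^sup>2 - \<gamma> / 2 * (norm q)\<^sup>2 = \<gamma> / 2 * (norm g)\<^sup>2 - \<gamma> * (g \<bullet> q)"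
    unfolding power2_norm_eq_inner by (simp add: inner_diff_left inner_diff_right inner_commute algebra_simps)
  ultimately show ?thesis
    by (simp add: g_def)
qed

theorem theorem7:
  fixes f :: "nat \<Rightarrow> 'a::euclidean_space \<Rightarrow> real"
    and V Vtil :: "nat \<Rightarrow> 'a \<Rightarrow> 'a"
    and S :: "nat \<Rightarrow> nat set"
    and agent :: "nat \<Rightarrow> 'b"
    and x xh :: "nat \<Rightarrow> 'a"
    and \<eta> \<gamma> :: "nat \<Rightarrow> real"
    and L :: real and \<tau> T :: nat and p :: 'a
  assumes convex: "\<And>t. convex_on UNIV (f t)"
    and grad: "\<And>t y. GDERIV (f t) y :> V t y"
    and lipschitz: "\<And>t y z. norm (V t y - V t z) \<le> L * norm (y - z)"
    and S_sub: "\<And>t. S t \<subseteq> {1..<t}"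
    and S_mono: "\<And>t t'. 1 \<le> t \<Longrightarrow> t \<le> t' \<Longrightarrow> agent t = agent t' \<Longrightarrow> S t \<subseteq> S t'"
    and delay: "\<And>t. 1 \<le> t \<Longrightarrow> {1..<t - \<tau>} \<subseteq> S t"
    and guess: "\<And>t. 1 \<le> t \<Longrightarrow>
                  (\<exists>s\<in>S t. Vtil t = V s) \<or> (S t = {} \<and> Vtil t = (\<lambda>_. 0))"
    and x_def: "\<And>t. 1 \<le> t \<Longrightarrow> x t = x 1 - \<eta> t *\<^sub>R (\<Sum>s\<in>S t. V s (xh s))"
    and xh_def: "\<And>t. 1 \<le> t \<Longrightarrow> xh t = x t - \<gamma> t *\<^sub>R Vtil t (x t)"
    and eta_pos: "\<And>t. 1 \<le> t \<Longrightarrow> 0 < \<eta> t"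
    and eta_mono: "\<And>t. 1 \<le> t \<Longrightarrow> \<eta> (t + 1) \<le> \<eta> t"
    and eta_gamma: "\<And>t. 1 \<le> t \<Longrightarrow> (2 * real \<tau> + 1) * \<eta> t \<le> \<gamma> t"
    and gamma_L: "\<And>t. 1 \<le> t \<Longrightarrow> 2 * \<gamma> t ^ 2 * L ^ 2 \<le> 1"
    and T_pos: "1 \<le> T"
  shows "(\<Sum>t=1..T. f t (xh t)) - (\<Sum>t=1..T. f t p)
           \<le> norm (p - x 1) ^ 2 / (2 * \<eta> T)
              + (\<Sum>t=1..T. \<gamma> t * norm (V t (x t) - Vtil t (x t)) ^ 2)"
proof -
  define g where "g t = V t (xh t)" for t
  define q where "q t = Vtil t (x t)" for t
  have linearized: "f t (xh t) - f t p \<le> g t \<bullet> (xh t - p)" for t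
    using convex_on_has_derivative_above_tangent[OF convex grad[unfolded gderiv_def], of t "xh t" p]
    by (simp add: g_def inner_diff_left inner_diff_right inner_commute)
  have xh_eq: "xh t = x 1 - \<eta> t *\<^sub>R (\<Sum>s\<in>S t. g s) - \<gamma> t *\<^sub>R q t" if "1 \<le> t" for t
    using xh_def[OF that] x_def[OF that] unfolding g_def q_def by simp
  have round: "(2 * real \<tau> + 1) * \<eta> t / 2 * (norm (g t))\<^sup>2 - \<gamma> t * (g t \<bullet> q t)
      \<le> \<gamma> t * norm (V t (x t) - q t) ^ 2" if t: "1 \<le> t" for t
  proof -
    have "0 \<le> \<gamma> t"
      using eta_gamma[OF t] eta_pos[OF t] by (smt (verit) mult_pos_pos of_nat_0_le_iff)
    have "\<gamma> t / 2 * (norm (g t))\<^sup>2 - \<gamma> t * (g t \<bullet> q t) \<le> \<gamma> t * norm (V t (x t) - q t) ^ 2"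
      unfolding g_def xh_def[OF t] q_def
      by (rule extra_gradient_step_le[OF lipschitz[of t] \<open>0 \<le> \<gamma> t\<close> gamma_L[OF t]])
    moreover have "(2 * real \<tau> + 1) * \<eta> t / 2 * (norm (g t))\<^sup>2 \<le> \<gamma> t / 2 * (norm (g t))\<^sup>2"
      using eta_gamma[OF t] by (intro mult_right_mono divide_right_mono) auto
    ultimately show ?thesis
      by linarith
  qed
  have "(\<Sum>t=1..T. f t (xh t)) - (\<Sum>t=1..T. f t p) \<le> (\<Sum>t=1..T. g t \<bullet> (xh t - p))"
    unfolding sum_subtractf[symmetric] using linearized by (rule sum_mono)
  also have "\<dots> \<le> norm (p - x 1) ^ 2 / (2 * \<eta> T)
      + (\<Sum>t=1..T. (2 * real \<tau> + 1) * \<eta> t / 2 * (norm (g t))\<^sup>2 - \<gamma> t * (g t \<bullet> q t))"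
    by (rule delayed_dual_averaging_linearized_regret[OF S_sub delay xh_eq eta_pos eta_mono T_pos])
  also have "\<dots> \<le> norm (p - x 1) ^ 2 / (2 * \<eta> T) + (\<Sum>t=1..T. \<gamma> t * norm (V t (x t) - q t) ^ 2)"
    using round by (intro add_left_mono sum_mono) auto
  finally show ?thesis
    by (simp add: q_def)
qed

end
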